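(* Let $(X,\phi)$ be a uniformly Lipschitz flow on a metric space $(X,d)$. Then for every non-empty subset $Z\subset X$, $$\overline{\mathrm{mdim}}^B(\phi,Z,d)=\overline{\mathrm{mdim}}^B(\phi_1,Z,d).$$
   Context: A flow: $\phi:X\times\mathbb{R}\to X$ continuous, $\phi_t(x)=\phi(x,t)$, $\phi_0=\mathrm{id}$, $\phi_{t+s}=\phi_t\circ\phi_s$. Uniformly Lipschitz: for every $t_0>0$ there is $L(t_0)>0$ such that for all $\epsilon>0$ and $x,y\in X$, $d(x,y)\le\epsilon/L(t_0)$ implies $d(\phi_sx,\phi_sy)<\epsilon$ for all $s\in[0,t_0]$. Balls: $B_n(x,\epsilon,\phi)=\{y:d(\phi_sx,\phi_sy)<\epsilon\ \forall s\in[0,n]\}$ and $B_n(x,\epsilon,\phi_1)=\{y:d(\phi_jx,\phi_jy)<\epsilon,\ j=0,\dots,n-1\}$. Bowen upper metric mean dimension: for $\lambda\in\mathbb{R}$, $N\in\mathbb{N}$, $\epsilon>0$, $M(\phi,d,Z,\lambda,N,\epsilon)=\inf\sum_{i\in I}e^{-n_i\lambda}$ over finite or countable families $\{B_{n_i}(x_i,\epsilon,\phi)\}_{i\in I}$ covering $Z$ with integers $n_i\ge N$; $M(\phi,d,Z,\lambda,\epsilon)=\lim_{N\to\infty}M(\phi,d,Z,\lambda,N,\epsilon)$; $M(\phi,d,Z,\epsilon)=\inf\{\lambda:M(\phi,d,Z,\lambda,\epsilon)=0\}$; $\overline{\mathrm{mdim}}^B(\phi,Z,d)=\limsup_{\epsilon\to0}\frac{M(\phi,d,Z,\epsilon)}{\log(1/\epsilon)}$.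 The quantity $\overline{\mathrm{mdim}}^B(\phi_1,Z,d)$ is defined identically with $B_{n_i}(x_i,\epsilon,\phi)$ replaced by $B_{n_i}(x_i,\epsilon,\phi_1)$. *)

theory Defs
  imports "HOL-Analysis.Analysis" "HOL-Library.Extended_Real" "HOL-Library.Extended_Nonnegative_Real"
begin

definition is_flow :: "('a::metric_space \<Rightarrow> real \<Rightarrow> 'a) \<Rightarrow> bool" where
  "is_flow phi \<longleftrightarrow> continuous_on UNIV (\<lambda>(x, t). phi x t)
     \<and> (\<forall>x. phi x 0 = x)
     \<and> (\<forall>x t s. phi x (t + s) = phi (phi x s) t)"

definition uniformly_lipschitz_flow :: "('a::metric_space \<Rightarrow> real \<Rightarrow> 'a) \<Rightarrow> bool" where
  "uniformly_lipschitz_flow phi \<longleftrightarrow>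
     (\<forall>t0>0. \<exists>L>0. \<forall>\<epsilon>>0. \<forall>x y. dist x y \<le> \<epsilon> / L \<longrightarrow>
        (\<forall>s\<in>{0..t0}. dist (phi x s) (phi y s) < \<epsilon>))"

definition flow_bowen_ball :: "('a::metric_space \<Rightarrow> real \<Rightarrow> 'a) \<Rightarrow> nat \<Rightarrow> 'a \<Rightarrow> real \<Rightarrow> 'a set" where
  "flow_bowen_ball phi n x \<epsilon> = {y. \<forall>s\<in>{0..real n}. dist (phi x s) (phi y s) < \<epsilon>}"

definition map_bowen_ball :: "('a::metric_space \<Rightarrow> 'a) \<Rightarrow> nat \<Rightarrow> 'a \<Rightarrow> real \<Rightarrow> 'a set" where
  "map_bowen_ball f n x \<epsilon> = {y. \<forall>j<n. dist ((f ^^ j) x) ((f ^^ j) y) < \<epsilon>}"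

text \<open>Generic Caratheodory-type construction for a family of balls B n x eps.
  Finite or countable covers are indexed by a set I of natural numbers.\<close>
definition bowen_M_N :: "(nat \<Rightarrow> 'a \<Rightarrow> real \<Rightarrow> 'a set) \<Rightarrow> 'a set \<Rightarrow> real \<Rightarrow> nat \<Rightarrow> real \<Rightarrow> ennreal" where
  "bowen_M_N B Z lam N \<epsilon> =
     Inf {(\<Sum>\<^sub>\<infinity> i\<in>I. ennreal (exp (- real (n i) * lam))) | (I :: nat set) n x.
            (\<forall>i\<in>I. n i \<ge> N) \<and> Z \<subseteq> (\<Union>i\<in>I. B (n i) (x i) \<epsilon>)}"

definition bowen_M :: "(nat \<Rightarrow> 'a \<Rightarrow> real \<Rightarrow> 'a set) \<Rightarrow> 'a set \<Rightarrow> real \<Rightarrow> real \<Rightarrow> ennreal" where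
  "bowen_M B Z lam \<epsilon> = lim (\<lambda>N. bowen_M_N B Z lam N \<epsilon>)"

definition bowen_crit :: "(nat \<Rightarrow> 'a \<Rightarrow> real \<Rightarrow> 'a set) \<Rightarrow> 'a set \<Rightarrow> real \<Rightarrow> ereal" where
  "bowen_crit B Z \<epsilon> = Inf (ereal ` {lam. bowen_M B Z lam \<epsilon> = 0})"

definition bowen_upper_mdim :: "(nat \<Rightarrow> 'a \<Rightarrow> real \<Rightarrow> 'a set) \<Rightarrow> 'a set \<Rightarrow> ereal" where
  "bowen_upper_mdim B Z = Limsup (at_right (0::real)) (\<lambda>\<epsilon>. bowen_crit B Z \<epsilon> / ereal (ln (1 / \<epsilon>)))"

abbreviation flow_bowen_mdim :: "('a::metric_space \<Rightarrow> real \<Rightarrow> 'a) \<Rightarrow> 'a set \<Rightarrow> ereal" where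
  "flow_bowen_mdim phi Z \<equiv> bowen_upper_mdim (flow_bowen_ball phi) Z"

abbreviation time_one_bowen_mdim :: "('a::metric_space \<Rightarrow> real \<Rightarrow> 'a) \<Rightarrow> 'a set \<Rightarrow> ereal" where
  "time_one_bowen_mdim phi Z \<equiv> bowen_upper_mdim (map_bowen_ball (\<lambda>x. phi x 1)) Z"

end

theory Submission
  imports Defs
begin

text \<open>A flow Bowen ball lies in the time-one Bowen ball of the same radius. Conversely, if L
  is a Lipschitz constant of the flow on [0, 1], a time-one Bowen ball of radius \<epsilon>/L lies in
  the flow Bowen ball of radius \<epsilon>, since every time in [0, n] is within one unit after some
  integer j < n. Critical exponents are antimonotone in the balls, so the critical exponents
  c(\<epsilon>) of the flow and c1(\<epsilon>) of its time-one map satisfy c1(\<epsilon>) \<le> c(\<epsilon>) \<le> c1(\<epsilon>/L),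
  and the factor L disappears after dividing by ln (1/\<epsilon>) because ln (L/\<epsilon>) / ln (1/\<epsilon>) \<rightarrow> 1.\<close>

lemma bowen_M_N_antimono:
  fixes B B' :: "nat \<Rightarrow> 'a \<Rightarrow> real \<Rightarrow> 'a set"
  assumes "\<And>n x. n \<ge> N \<Longrightarrow> B n x e \<subseteq> B' n x e'"
  shows "bowen_M_N B' Z lam N e' \<le> bowen_M_N B Z lam N e"
  unfolding bowen_M_N_def
proof (rule Inf_superset_mono, safe)
  fix I :: "nat set" and n x
  assume N: "\<forall>i\<in>I. N \<le> n i" and cover: "Z \<subseteq> (\<Union>i\<in>I. B (n i) (x i) e)"
  have "(\<Union>i\<in>I. B (n i) (x i) e) \<subseteq> (\<Union>i\<in>I. B' (n i) (x i) e')"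
    using assms N by (intro UN_mono) auto
  with cover have "Z \<subseteq> (\<Union>i\<in>I. B' (n i) (x i) e')"
    by (rule order_trans)
  with N show "\<exists>(I' :: nat set) n' x'.
      (\<Sum>\<^sub>\<infinity>i\<in>I. ennreal (exp (- real (n i) * lam))) = (\<Sum>\<^sub>\<infinity>i\<in>I'. ennreal (exp (- real (n' i) * lam)))
      \<and> (\<forall>i\<in>I'. N \<le> n' i) \<and> Z \<subseteq> (\<Union>i\<in>I'. B' (n' i) (x' i) e')"
    by blast
qed

lemma incseq_bowen_M_N: "incseq (\<lambda>N. bowen_M_N B Z lam N e)"
  unfolding incseq_def bowen_M_N_def
  by (intro allI impI Inf_superset_mono) (auto, fastforce)

lemma bowen_M_eq_SUP: "bowen_M B Z lam e = (SUP N. bowen_M_N B Z lam N e)"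
  unfolding bowen_M_def using LIMSEQ_SUP[OF incseq_bowen_M_N] by (rule limI)

text \<open>Only n \<ge> 1 is required: a Bowen ball of length 0 for a map is the whole space.\<close>

lemma bowen_M_antimono:
  fixes B B' :: "nat \<Rightarrow> 'a \<Rightarrow> real \<Rightarrow> 'a set"
  assumes "\<And>n x. n \<ge> 1 \<Longrightarrow> B n x e \<subseteq> B' n x e'"
  shows "bowen_M B' Z lam e' \<le> bowen_M B Z lam e"
  unfolding bowen_M_eq_SUP
proof (rule SUP_least)
  fix N
  have "bowen_M_N B' Z lam N e' \<le> bowen_M_N B' Z lam (Suc N) e'"
    using incseq_bowen_M_N[of B' Z lam e'] by (simp add: incseq_def)
  also have "\<dots> \<le> bowen_M_N B Z lam (Suc N) e"
    by (rule bowen_M_N_antimono) (use assms in auto)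
  also have "\<dots> \<le> (SUP N. bowen_M_N B Z lam N e)"
    by (rule SUP_upper) simp
  finally show "bowen_M_N B' Z lam N e' \<le> (SUP N. bowen_M_N B Z lam N e)" .
qed

lemma bowen_crit_antimono:
  fixes B B' :: "nat \<Rightarrow> 'a \<Rightarrow> real \<Rightarrow> 'a set"
  assumes "\<And>n x. n \<ge> 1 \<Longrightarrow> B n x e \<subseteq> B' n x e'"
  shows "bowen_crit B' Z e' \<le> bowen_crit B Z e"
  unfolding bowen_crit_def
proof (intro Inf_superset_mono image_mono subsetI, simp)
  fix lam assume "bowen_M B Z lam e = 0"
  then show "bowen_M B' Z lam e' = 0"
    using bowen_M_antimono[of B e B' e' Z lam] assms by simp
qed

text \<open>For \<open>lam \<le> 0\<close> each term of a nonempty cover of Z contributes at least 1.\<close>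

lemma bowen_crit_nonneg:
  assumes "Z \<noteq> {}"
  shows "0 \<le> bowen_crit B Z e"
  unfolding bowen_crit_def
proof (rule Inf_greatest, safe)
  fix lam assume M0: "bowen_M B Z lam e = 0"
  show "0 \<le> ereal lam"
  proof (rule ccontr)
    assume "\<not> 0 \<le> ereal lam"
    then have lam: "lam \<le> 0" by simp
    have "1 \<le> bowen_M_N B Z lam 0 e"
      unfolding bowen_M_N_def
    proof (rule Inf_greatest, safe)
      fix I :: "nat set" and n x
      assume "Z \<subseteq> (\<Union>i\<in>I. B (n i) (x i) e)"
      with assms obtain i where i: "i \<in> I" by blast
      have "ennreal 1 \<le> ennreal (exp (- real (n i) * lam))"
        using lam by (intro ennreal_leI) (simp add: mult_nonneg_nonpos)
      also have "\<dots> = (\<Sum>\<^sub>\<infinity>j\<in>{i}. ennreal (exp (- real (n j) * lam)))"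
        by simp
      also have "\<dots> \<le> (\<Sum>\<^sub>\<infinity>j\<in>I. ennreal (exp (- real (n j) * lam)))"
        by (rule infsum_mono_neutral) (use i in \<open>auto simp: nonneg_summable_on_complete\<close>)
      finally show "1 \<le> (\<Sum>\<^sub>\<infinity>j\<in>I. ennreal (exp (- real (n j) * lam)))"
        by simp
    qed
    also have "\<dots> \<le> bowen_M B Z lam e"
      unfolding bowen_M_eq_SUP by (rule SUP_upper) simp
    finally show False
      using M0 by simp
  qed
qed

lemma funpow_time_one_map:
  assumes "is_flow phi"
  shows "((\<lambda>x. phi x 1) ^^ j) x = phi x (real j)"
proof (induction j)
  case 0
  then show ?case using assms by (simp add: is_flow_def)
next
  case (Suc j)
  have "phi x (1 + real j) = phi (phi x (real j)) 1"
    using assms by (simp add: is_flow_def)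
  then show ?case using Suc by (simp add: add.commute)
qed

lemma flow_bowen_ball_subset_map_bowen_ball:
  assumes "is_flow phi"
  shows "flow_bowen_ball phi n x e \<subseteq> map_bowen_ball (\<lambda>x. phi x 1) n x e"
  unfolding flow_bowen_ball_def map_bowen_ball_def funpow_time_one_map[OF assms]
  by auto

lemma obtain_unit_interval_containing:
  fixes s :: real
  assumes "s \<in> {0..real n}" and "n \<ge> 1"
  obtains j where "j < n" and "real j \<le> s" and "s \<le> real j + 1"
proof (cases "s < real n")
  case True
  show ?thesis
  proof
    have "\<lfloor>s\<rfloor> < int n" using True by (simp add: floor_less_iff)
    then show "nat \<lfloor>s\<rfloor> < n" using assms(1) by (simp add: nat_less_iff)
    have "real (nat \<lfloor>s\<rfloor>) = of_int \<lfloor>s\<rfloor>" using assms(1) by simp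
    then show "real (nat \<lfloor>s\<rfloor>) \<le> s" "s \<le> real (nat \<lfloor>s\<rfloor>) + 1"
      using of_int_floor_le[of s] real_of_int_floor_add_one_ge[of s] by linarith+
  qed
next
  case False
  show ?thesis
  proof
    show "n - 1 < n" "real (n - 1) \<le> s" "s \<le> real (n - 1) + 1"
      using False assms by (auto simp: of_nat_diff)
  qed
qed

lemma map_bowen_ball_subset_flow_bowen_ball:
  assumes "is_flow phi" and "n \<ge> 1"
    and close: "\<And>x y s. dist x y < \<delta> \<Longrightarrow> s \<in> {0..1} \<Longrightarrow> dist (phi x s) (phi y s) < e"
  shows "map_bowen_ball (\<lambda>x. phi x 1) n x \<delta> \<subseteq> flow_bowen_ball phi n x e"
proof
  fix y assume y: "y \<in> map_bowen_ball (\<lambda>x. phi x 1) n x \<delta>"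
  show "y \<in> flow_bowen_ball phi n x e"
    unfolding flow_bowen_ball_def
  proof safe
    fix s assume "s \<in> {0..real n}"
    then obtain j where j: "j < n" "real j \<le> s" "s \<le> real j + 1"
      using obtain_unit_interval_containing \<open>n \<ge> 1\<close> by blast
    have "dist (phi x (real j)) (phi y (real j)) < \<delta>"
      using y j(1) unfolding map_bowen_ball_def funpow_time_one_map[OF assms(1)] by auto
    then have "dist (phi (phi x (real j)) (s - real j)) (phi (phi y (real j)) (s - real j)) < e"
      using close j by auto
    moreover have "phi (phi z (real j)) (s - real j) = phi z s" for z
      using assms(1) unfolding is_flow_def by (metis diff_add_cancel)
    ultimately show "dist (phi x s) (phi y s) < e" by simp
  qed
qed

lemma ereal_le_if_le_mult_epsilon:
  fixes x y :: ereal
  assumes le: "\<And>d. d > 0 \<Longrightarrow> x \<le> ereal (1 + d) * y"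
  shows "x \<le> y"
proof (cases y)
  case PInf
  then show ?thesis by simp
next
  case MInf
  then show ?thesis using le[of 1] by simp
next
  case (real r)
  show ?thesis
  proof (cases "r > 0")
    case True
    show ?thesis
    proof (rule ereal_le_epsilon2)
      fix t :: real assume "t > 0"
      have "x \<le> ereal ((1 + t / r) * r)"
        using le[of "t / r"] \<open>t > 0\<close> True real by simp
      also have "(1 + t / r) * r = r + t"
        using True by (simp add: field_simps)
      finally show "x \<le> y + ereal t" using real by simp
    qed
  next
    case False
    have "x \<le> ereal ((1 + 1) * r)" using le[of 1] real by simp
    also have "\<dots> \<le> y" using False real by simp
    finally show ?thesis .
  qed
qed

lemma ereal_divide_le_mult_divide:
  fixes c :: ereal and a b k :: real
  assumes "0 \<le> c" "0 < a" "0 < b" "0 < k" "b \<le> k * a"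
  shows "c / ereal a \<le> ereal k * (c / ereal b)"
proof (cases c)
  case (real r)
  have "r * b \<le> r * (k * a)"
    using real assms by (intro mult_left_mono) auto
  then have "r / a \<le> k * (r / b)"
    using assms by (simp add: field_simps)
  then show ?thesis using real assms by simp
qed (use assms in simp_all)

text \<open>The key estimate is ln (1/(c\<epsilon>)) = ln (1/\<epsilon>) - ln c \<le> (1 + d) ln (1/\<epsilon>) once \<epsilon> < c powr (1/d).\<close>

lemma Limsup_rescaled_div_ln_le:
  fixes f :: "real \<Rightarrow> ereal" and c :: real
  assumes f_nonneg: "\<And>e. 0 \<le> f e" and "c > 0"
  shows "Limsup (at_right 0) (\<lambda>e. f (c * e) / ereal (ln (1 / e)))
    \<le> Limsup (at_right 0) (\<lambda>e. f e / ereal (ln (1 / e)))"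
    (is "?lhs \<le> Limsup _ ?g")
proof (rule ereal_le_if_le_mult_epsilon)
  fix d :: real assume "d > 0"
  have small: "\<forall>\<^sub>F e in at_right 0. e < min 1 (min (1 / c) (exp (ln c / d)))"
    using eventually_at_right_real[of 0 "min 1 (min (1 / c) (exp (ln c / d)))"] \<open>c > 0\<close>
    by (auto elim: eventually_mono)
  have "\<forall>\<^sub>F e in at_right 0. f (c * e) / ereal (ln (1 / e)) \<le> ereal (1 + d) * ?g (c * e)"
    using small eventually_at_right_less[of "0::real"]
  proof eventually_elim
    case (elim e)
    then have "e < 1" and "c * e < 1"
      using \<open>c > 0\<close> by (auto simp: field_simps)
    have "ln e < ln c / d"
      using elim by (metis exp_less_cancel_iff exp_ln min_less_iff_conj)
    have "ln (1 / (c * e)) = ln (1 / e) - ln c"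
      using elim \<open>c > 0\<close> by (simp add: ln_div ln_mult)
    also have "\<dots> \<le> (1 + d) * ln (1 / e)"
      using \<open>ln e < ln c / d\<close> \<open>d > 0\<close> elim by (simp add: ln_div field_simps)
    finally show ?case
      using elim \<open>e < 1\<close> \<open>c * e < 1\<close> \<open>c > 0\<close> \<open>d > 0\<close>
      by (intro ereal_divide_le_mult_divide f_nonneg) auto
  qed
  then have "?lhs \<le> Limsup (at_right 0) (\<lambda>e. ereal (1 + d) * ?g (c * e))"
    by (rule Limsup_mono)
  also have "\<dots> = ereal (1 + d) * Limsup (at_right 0) (\<lambda>e. ?g (c * e))"
    by (rule Limsup_ereal_mult_left) (use \<open>d > 0\<close> in auto)
  also have "Limsup (at_right 0) (\<lambda>e. ?g (c * e)) = Limsup (at_right 0) ?g"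
  proof -
    have "filtermap (times c) (at_right (0::real)) = at_right 0"
      using filtermap_times_pos_at_right[of c 0] \<open>c > 0\<close> by simp
    moreover have "Limsup (filtermap (times c) (at_right 0)) ?g = Limsup (at_right 0) (\<lambda>e. ?g (c * e))"
      by (rule Limsup_filtermap_eq) (use \<open>c > 0\<close> in \<open>auto simp: inj_def\<close>)
    ultimately show ?thesis by simp
  qed
  finally show "?lhs \<le> ereal (1 + d) * Limsup (at_right 0) ?g" .
qed

lemma Limsup_div_ln_eq_if_rescaled_bounds:
  fixes f g :: "real \<Rightarrow> ereal" and c :: real
  assumes g_nonneg: "\<And>e. 0 \<le> g e" and "c > 0"
    and lower: "\<And>e. e > 0 \<Longrightarrow> g e \<le> f e"
    and upper: "\<And>e. e > 0 \<Longrightarrow> f e \<le> g (c * e)"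
  shows "Limsup (at_right 0) (\<lambda>e. f e / ereal (ln (1 / e)))
    = Limsup (at_right 0) (\<lambda>e. g e / ereal (ln (1 / e)))"
proof (rule antisym)
  have "\<forall>\<^sub>F e in at_right (0::real). e \<in> {0<..<1}"
    using eventually_at_right_real[OF zero_less_one] .
  then have ln_pos: "\<forall>\<^sub>F e in at_right (0::real). e > 0 \<and> ln (1 / e) > 0"
    by (rule eventually_mono) simp
  have "Limsup (at_right 0) (\<lambda>e. f e / ereal (ln (1 / e)))
      \<le> Limsup (at_right 0) (\<lambda>e. g (c * e) / ereal (ln (1 / e)))"
    by (intro Limsup_mono eventually_mono[OF ln_pos]) (simp add: upper ereal_divide_right_mono)
  also have "\<dots> \<le> Limsup (at_right 0) (\<lambda>e. g e / ereal (ln (1 / e)))"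
    by (rule Limsup_rescaled_div_ln_le[OF g_nonneg \<open>c > 0\<close>])
  finally show "Limsup (at_right 0) (\<lambda>e. f e / ereal (ln (1 / e)))
      \<le> Limsup (at_right 0) (\<lambda>e. g e / ereal (ln (1 / e)))" .
  show "Limsup (at_right 0) (\<lambda>e. g e / ereal (ln (1 / e)))
      \<le> Limsup (at_right 0) (\<lambda>e. f e / ereal (ln (1 / e)))"
    by (intro Limsup_mono eventually_mono[OF ln_pos]) (simp add: lower ereal_divide_right_mono)
qed

theorem proposition2p11:
  fixes phi :: "'a::metric_space \<Rightarrow> real \<Rightarrow> 'a" and Z :: "'a set"
  assumes "is_flow phi" and "uniformly_lipschitz_flow phi" and "Z \<noteq> {}"
  shows "flow_bowen_mdim phi Z = time_one_bowen_mdim phi Z"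
proof -
  obtain L where "L > 0" and lip:
    "\<And>e x y. e > 0 \<Longrightarrow> dist x y \<le> e / L \<Longrightarrow> \<forall>s\<in>{0..1}. dist (phi x s) (phi y s) < e"
    using assms(2) unfolding uniformly_lipschitz_flow_def by (meson zero_less_one)
  have time_one_le_flow:
    "bowen_crit (map_bowen_ball (\<lambda>x. phi x 1)) Z e \<le> bowen_crit (flow_bowen_ball phi) Z e" for e
    by (intro bowen_crit_antimono flow_bowen_ball_subset_map_bowen_ball assms(1))
  have flow_le_time_one:
    "bowen_crit (flow_bowen_ball phi) Z e \<le> bowen_crit (map_bowen_ball (\<lambda>x. phi x 1)) Z (inverse L * e)"
    if "e > 0" for e
  proof -
    have "bowen_crit (flow_bowen_ball phi) Z e \<le> bowen_crit (map_bowen_ball (\<lambda>x. phi x 1)) Z (e / L)"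
      using lip[OF that]
      by (intro bowen_crit_antimono map_bowen_ball_subset_flow_bowen_ball assms(1)) auto
    then show ?thesis by (simp add: field_simps)
  qed
  show ?thesis
    unfolding bowen_upper_mdim_def
    using bowen_crit_nonneg[OF assms(3)] time_one_le_flow flow_le_time_one \<open>L > 0\<close>
    by (intro Limsup_div_ln_eq_if_rescaled_bounds[where c = "inverse L"]) auto
qed

end
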